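(* Assume $\operatorname{non}(\mathcal N)=\mathfrak c$. Then $\mathcal{ANM}_{\mathfrak c}\setminus\mathcal{ND}_{\mathfrak c}$ is strongly $\mathfrak c$-algebrable in $\left(\mathbb R^{[0,1]}\right)^{\mathfrak c}$.
   Context: For a regular infinite cardinal $\kappa$, a $\kappa$-sequence $(x_\alpha)_{\alpha<\kappa}$ converges to $x$ if for every neighbourhood $U$ of $x$ there is $\alpha_0<\kappa$ with $x_\alpha\in U$ for all $\alpha_0<\alpha<\kappa$; $\left(\mathbb R^{[0,1]}\right)^{\kappa}$ is the commutative real algebra of $\kappa$-sequences of functions $[0,1]\to\mathbb R$ with indexwise addition, multiplication and scalar multiplication. $\lambda$ is Lebesgue measure, $\mathcal N$ the null subsets of $[0,1]$, $\operatorname{non}(\mathcal N)$ the least cardinality of a non-null subset of $[0,1]$. $\mathcal{ANM}_{\kappa}$: $\kappa$-sequences of Lebesgue measurable $f_\alpha:[0,1]\to\mathbb R$ converging a.e. to a measurable $f$ but not converging in measure to $f$. $\mathcal{ND}_{\kappa}$: $\kappa$-sequences of Lebesgue measurable $f_\alpha:[0,1]\to\mathbb R$ dominated a.e. by a common integrable $g$, converging a.e. to an integrable $f$, with $\int|f_\alpha-f|\,d\lambda\not\to0$. $S$ is strongly $\mu$-algebrable if there is a set $X$ of $\mu$ algebraically independent elements such that every nonzero element of the (non-unital) algebra generated by $X$ belongs to $S$. *)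

theory Defs
  imports "HOL-Analysis.Analysis" "HOL-Library.Equipollence" "HOL-Library.Poly_Mapping"
begin

text \<open>Index set of continuum-sequences: the initial ordinal of the continuum,
  realised as the cardinal well-order on the reals.\<close>
definition cidx :: "real rel" where
  "cidx = card_of (UNIV :: real set)"

text \<open>Filter of tails of a well-order: x_alpha converges to x along it iff for every
  neighbourhood U there is alpha0 with x_alpha in U for all alpha0 < alpha.\<close>
definition tailF :: "'i rel \<Rightarrow> 'i filter" where
  "tailF r = (INF a\<in>Field r. principal {b. (a, b) \<in> r \<and> a \<noteq> b})"

abbreviation L01 :: "real measure" where
  "L01 \<equiv> lebesgue_on {0..1}"

text \<open>Sequences F alpha : [0,1] -> R; values outside [0,1] are irrelevant.\<close>
definition conv_in_measure :: "'i rel \<Rightarrow> ('i \<Rightarrow> real \<Rightarrow> real) \<Rightarrow> (real \<Rightarrow> real) \<Rightarrow> bool" where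
  "conv_in_measure r F f \<longleftrightarrow>
     (\<forall>e>0. ((\<lambda>a. measure L01 {x\<in>{0..1}. \<bar>F a x - f x\<bar> \<ge> e}) \<longlongrightarrow> 0) (tailF r))"

definition ANM :: "'i rel \<Rightarrow> ('i \<Rightarrow> real \<Rightarrow> real) set" where
  "ANM r = {F. (\<forall>a\<in>Field r. F a \<in> borel_measurable L01) \<and>
     (\<exists>f. f \<in> borel_measurable L01 \<and>
          (AE x in L01. ((\<lambda>a. F a x) \<longlongrightarrow> f x) (tailF r)) \<and>
          \<not> conv_in_measure r F f)}"

definition ND :: "'i rel \<Rightarrow> ('i \<Rightarrow> real \<Rightarrow> real) set" where
  "ND r = {F. (\<forall>a\<in>Field r. F a \<in> borel_measurable L01) \<and>
     (\<exists>g. integrable L01 g \<and> (\<forall>a\<in>Field r. AE x in L01. \<bar>F a x\<bar> \<le> g x)) \<and>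
     (\<exists>f. integrable L01 f \<and>
          (AE x in L01. ((\<lambda>a. F a x) \<longlongrightarrow> f x) (tailF r)) \<and>
          \<not> (((\<lambda>a. integral\<^sup>L L01 (\<lambda>x. \<bar>F a x - f x\<bar>)) \<longlongrightarrow> 0) (tailF r)))}"

text \<open>Carrier of the algebra (R^[0,1])^kappa: sequences of functions on [0,1],
  represented as functions vanishing outside [0,1].\<close>
definition seq_carrier :: "('i \<Rightarrow> real \<Rightarrow> real) set" where
  "seq_carrier = {F. \<forall>a t. t \<notin> {0..1} \<longrightarrow> F a t = 0}"

inductive_set gen_alg :: "('i \<Rightarrow> real \<Rightarrow> real) set \<Rightarrow> ('i \<Rightarrow> real \<Rightarrow> real) set"
  for X where
  gen_base: "F \<in> X \<Longrightarrow> F \<in> gen_alg X"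
| gen_add: "F \<in> gen_alg X \<Longrightarrow> G \<in> gen_alg X \<Longrightarrow> (\<lambda>a t. F a t + G a t) \<in> gen_alg X"
| gen_mult: "F \<in> gen_alg X \<Longrightarrow> G \<in> gen_alg X \<Longrightarrow> (\<lambda>a t. F a t * G a t) \<in> gen_alg X"
| gen_scale: "F \<in> gen_alg X \<Longrightarrow> (\<lambda>a t. c * F a t) \<in> gen_alg X"

definition mono_eval :: "(('i \<Rightarrow> real \<Rightarrow> real) \<Rightarrow>\<^sub>0 nat) \<Rightarrow> 'i \<Rightarrow> real \<Rightarrow> real" where
  "mono_eval m a t = (\<Prod>v\<in>Poly_Mapping.keys m. (v a t) ^ (Poly_Mapping.lookup m v))"

definition poly_eval ::
  "((('i \<Rightarrow> real \<Rightarrow> real) \<Rightarrow>\<^sub>0 nat) \<Rightarrow>\<^sub>0 real) \<Rightarrow> ('i \<Rightarrow> real \<Rightarrow> real)" where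
  "poly_eval P a t = (\<Sum>m\<in>Poly_Mapping.keys P. Poly_Mapping.lookup P m * mono_eval m a t)"

text \<open>Algebraic independence (in the non-unital sense): no nonzero polynomial without
  constant term in finitely many distinct elements of X vanishes on them.\<close>
definition alg_indep :: "('i \<Rightarrow> real \<Rightarrow> real) set \<Rightarrow> bool" where
  "alg_indep X \<longleftrightarrow> (\<forall>P. P \<noteq> 0 \<and> Poly_Mapping.lookup P 0 = 0 \<and> (\<forall>m\<in>Poly_Mapping.keys P. Poly_Mapping.keys m \<subseteq> X)
       \<longrightarrow> poly_eval P \<noteq> (\<lambda>a t. 0))"

definition strongly_algebrable :: "('i \<Rightarrow> real \<Rightarrow> real) set \<Rightarrow> 'c set \<Rightarrow> bool" where
  "strongly_algebrable S M \<longleftrightarrow> (\<exists>X. X \<subseteq> seq_carrier \<and> X \<approx> M \<and> alg_indep X \<and>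
       (\<forall>F\<in>gen_alg X. F \<noteq> (\<lambda>a t. 0) \<longrightarrow> F \<in> S))"

end

theory Submission
  imports Defs
begin

text \<open>
  Fix a set B of continuum many positive reals, linearly independent over the rationals, and
  index sequences by the initial ordinal of the continuum. The initial segments
  S(\<alpha>) = {\<beta>. \<beta> < \<alpha>} have fewer than continuum many elements, so by non(N) = c they are
  null. The generator attached to b \<in> B is F(\<alpha>, t) = exp (b / t) for t \<in> [0,1] - S(\<alpha>), and 0
  otherwise. Every element of the generated algebra is truncated in the same way from some
  q(t) = \<Sum> c_i exp (s_i / t) with all s_i > 0, and if q \<noteq> 0 its term of largest frequency
  dominates, so |q(t)| \<ge> \<kappa> / t near 0. Every point eventually lies in S(\<alpha>), hence the
  sequence tends to 0 everywhere; yet |F(\<alpha>, -)| \<ge> \<kappa> on (0,\<delta>] - S(\<alpha>), a set of measure \<delta>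
  for every \<alpha>, and a dominating function would majorize the non-integrable \<kappa> / t on (0,\<delta>].
  A monomial in the generators with exponents k(b) is exp ((\<Sum> k(b) b) / t), and rational
  independence makes these frequencies distinct for distinct monomials; so a nonzero
  polynomial in the generators is again such a truncated q with q \<noteq> 0, which is what
  algebraic independence requires.
\<close>

section \<open>Continuum many rationally independent positive reals\<close>

lemma times_self_lepoll_infinite:
  assumes "infinite A"
  shows "A \<times> A \<lesssim> A"
  using card_of_Times_same_infinite[OF assms] eqpoll_iff_card_of_ordIso eqpoll_imp_lepoll by blast

lemma lists_lepoll_self:
  assumes "infinite A"
  shows "lists A \<lesssim> A"
proof -
  have level: "{xs \<in> lists A. length xs = n} \<lesssim> A" for n
  proof (induction n)
    case 0
    have "{xs \<in> lists A. length xs = 0} = {[]}" by auto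
    then show ?case using assms by (simp add: finite_lepoll_infinite)
  next
    case (Suc n)
    have "{xs \<in> lists A. length xs = Suc n} = (\<lambda>(x, xs). x # xs) ` (A \<times> {xs \<in> lists A. length xs = n})"
      by (auto simp: length_Suc_conv)
    also have "\<dots> \<lesssim> A \<times> {xs \<in> lists A. length xs = n}" by (rule image_lepoll)
    also have "\<dots> \<lesssim> A \<times> A" using Suc.IH by (simp add: times_lepoll_mono)
    finally show ?case using times_self_lepoll_infinite[OF assms] by (rule lepoll_trans)
  qed
  have "ordLeq2 (card_of (\<Union>n. {xs \<in> lists A. length xs = n})) (card_of A)"
  proof (rule card_of_UNION_ordLeq_infinite[OF assms])
    show "ordLeq2 (card_of (UNIV :: nat set)) (card_of A)"
      using assms by (simp add: infinite_le_lepoll lepoll_def card_of_ordLeq)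
    show "\<forall>n\<in>UNIV. ordLeq2 (card_of {xs \<in> lists A. length xs = n}) (card_of A)"
      using level by (simp add: lepoll_def card_of_ordLeq)
  qed
  moreover have "(\<Union>n. {xs \<in> lists A. length xs = n}) = lists A" by auto
  ultimately show ?thesis by (simp add: lepoll_def card_of_ordLeq)
qed

interpretation Q: vector_space "\<lambda>(q::rat) (x::real). of_rat q * x"
  by unfold_locales (auto simp: algebra_simps of_rat_add of_rat_mult)

lemma Q_span_lepoll:
  "Q.span B \<lesssim> lists (B \<times> (UNIV :: rat set))"
proof -
  define comb where "comb xs = (\<Sum>(b, q)\<leftarrow>xs. of_rat q * b)" for xs :: "(real \<times> rat) list"
  have "Q.span B \<subseteq> comb ` lists (B \<times> UNIV)"
  proof
    fix y assume "y \<in> Q.span B"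
    then obtain S u where y: "y = (\<Sum>b\<in>S. of_rat (u b) * b)" "finite S" "S \<subseteq> B"
      unfolding Q.span_explicit by blast
    obtain bs where bs: "set bs = S" "distinct bs" using finite_distinct_list[OF y(2)] by blast
    have "comb (map (\<lambda>b. (b, u b)) bs) = y"
      using bs y(1) by (simp add: comb_def o_def sum_list_distinct_conv_sum_set)
    moreover have "map (\<lambda>b. (b, u b)) bs \<in> lists (B \<times> UNIV)" using bs y(3) by auto
    ultimately show "y \<in> comb ` lists (B \<times> UNIV)" by blast
  qed
  then show ?thesis using subset_imp_lepoll image_lepoll lepoll_trans by blast
qed

lemma Q_independent_positive_reals:
  obtains B :: "real set" where "B \<subseteq> {0<..}" "Q.independent B" "B \<approx> (UNIV :: real set)"
proof -
  obtain B where B: "B \<subseteq> {0<..}" "Q.independent B" "{0<..} \<subseteq> Q.span B"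
    using Q.maximal_independent_subset_extend[of "{}" "{0::real<..}"] Q.independent_empty by auto
  have "(UNIV :: real set) \<lesssim> {0::real<..}"
    unfolding lepoll_def by (intro exI[of _ exp]) (auto simp: inj_on_def)
  also have "\<dots> \<lesssim> lists (B \<times> (UNIV :: rat set))"
    using B(3) Q_span_lepoll subset_imp_lepoll lepoll_trans by blast
  finally have U: "(UNIV :: real set) \<lesssim> lists (B \<times> (UNIV :: rat set))" .
  have "infinite B"
  proof
    assume "finite B"
    then have "countable (lists (B \<times> (UNIV :: rat set)))"
      by (intro countable_lists countable_SIGMA) (auto intro: countable_finite)
    then show False using countable_lepoll[OF _ U] uncountable_UNIV_real by blast
  qed
  have "lists (B \<times> (UNIV :: rat set)) \<lesssim> B \<times> (UNIV :: rat set)"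
    using \<open>infinite B\<close> by (intro lists_lepoll_self) (auto simp: finite_cartesian_product_iff)
  also have "\<dots> \<lesssim> B \<times> B"
  proof (rule times_lepoll_mono[OF lepoll_refl])
    have "(UNIV :: rat set) \<lesssim> (UNIV :: nat set)"
      unfolding lepoll_def by (intro exI[of _ to_nat]) auto
    then show "(UNIV :: rat set) \<lesssim> B" using \<open>infinite B\<close> infinite_le_lepoll lepoll_trans by blast
  qed
  also have "\<dots> \<lesssim> B"
    using \<open>infinite B\<close> by (rule times_self_lepoll_infinite)
  finally have "(UNIV :: real set) \<lesssim> B" using U lepoll_trans by blast
  then have "B \<approx> (UNIV :: real set)" by (simp add: lepoll_antisym subset_imp_lepoll)
  with B(1,2) show ?thesis by (rule that)
qed

section \<open>Tails of well-orders\<close>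

lemma eventually_tailF:
  assumes r: "Linear_order r" and "Field r \<noteq> {}"
  shows "eventually P (tailF r) \<longleftrightarrow> (\<exists>a\<in>Field r. \<forall>b\<in>aboveS r a. P b)"
proof -
  have tailF_aboveS: "tailF r = (INF a\<in>Field r. principal (aboveS r a))"
    unfolding tailF_def aboveS_def by (simp add: conj_commute eq_commute)
  have "trans r" "antisym r"
    using r by (auto simp: linear_order_on_def partial_order_on_def preorder_on_def)
  then have aboveS_mono: "aboveS r b \<subseteq> aboveS r a" if "(a, b) \<in> r" for a b
    using that unfolding aboveS_def by (auto dest: transD antisymD)
  have directed: "\<exists>c\<in>Field r. aboveS r c \<subseteq> aboveS r a \<inter> aboveS r b"
    if "a \<in> Field r" "b \<in> Field r" for a b
  proof -
    have "(a, b) \<in> r \<or> (b, a) \<in> r"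
      using r that unfolding linear_order_on_def partial_order_on_def preorder_on_def refl_on_def total_on_def
      by (cases "a = b") auto
    then show ?thesis using aboveS_mono that by blast
  qed
  have "eventually P (INF a\<in>Field r. principal (aboveS r a)) \<longleftrightarrow>
      (\<exists>a\<in>Field r. eventually P (principal (aboveS r a)))"
    by (rule eventually_INF_base) (use assms(2) directed in simp_all)
  then show ?thesis
    unfolding tailF_aboveS eventually_principal .
qed

lemma tailF_neq_bot:
  assumes "Linear_order r" "Field r \<noteq> {}" "\<And>a. a \<in> Field r \<Longrightarrow> aboveS r a \<noteq> {}"
  shows "tailF r \<noteq> bot"
  using eventually_tailF[OF assms(1,2), of "\<lambda>_. False"] assms(3) by (simp add: trivial_limit_def)

lemma Card_order_cidx: "Card_order cidx"
  unfolding cidx_def by (rule card_of_Card_order)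

lemma Field_cidx: "Field cidx = UNIV"
  unfolding cidx_def by (rule Field_card_of)

lemma Linear_order_cidx: "Linear_order cidx"
  using Card_order_cidx unfolding card_order_on_def well_order_on_def by blast

lemma tailF_cidx_neq_bot: "tailF cidx \<noteq> bot"
proof (rule tailF_neq_bot[OF Linear_order_cidx])
  fix a assume "a \<in> Field cidx"
  then obtain b where "a \<noteq> b" "(a, b) \<in> cidx"
    using infinite_Card_order_limit[OF Card_order_cidx] by (auto simp: Field_cidx infinite_UNIV_char_0)
  then show "aboveS cidx a \<noteq> {}" by (auto simp: aboveS_def)
qed (simp add: Field_cidx)

lemma eventually_in_underS_cidx: "eventually (\<lambda>a. x \<in> underS cidx a) (tailF cidx)"
  unfolding eventually_tailF[OF Linear_order_cidx, unfolded Field_cidx, OF UNIV_not_empty]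
  by (auto simp: aboveS_def underS_def)

lemma underS_cidx_lesspoll: "underS cidx a \<prec> (UNIV :: real set)"
proof -
  have "ordLess2 (card_of (underS cidx a)) (card_of (UNIV :: real set))"
    using card_of_underS[OF Card_order_cidx] Field_cidx by (simp add: cidx_def)
  then show ?thesis
    unfolding lesspoll_def lepoll_def eqpoll_iff_card_of_ordIso card_of_ordLeq
    using not_ordLess_ordIso ordLess_imp_ordLeq by blast
qed

section \<open>Exponential polynomials in 1/t\<close>

lemma exp_poly_growth_finite:
  fixes C :: "real \<Rightarrow> real"
  assumes K: "finite K" "K \<subseteq> {0<..}" and nz: "\<exists>s\<in>K. C s \<noteq> 0"
  shows "\<exists>\<kappa>>0. eventually (\<lambda>t. \<kappa> / t \<le> \<bar>\<Sum>s\<in>K. C s * exp (s / t)\<bar>) (at_right 0)"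
proof -
  define K' where "K' = {s\<in>K. C s \<noteq> 0}"
  have K': "finite K'" "K' \<noteq> {}" "K' \<subseteq> K" using K nz unfolding K'_def by auto
  define m where "m = Max K'"
  have m: "m \<in> K'" "\<And>s. s \<in> K' \<Longrightarrow> s \<le> m" using K' unfolding m_def by auto
  have "m > 0" "C m \<noteq> 0" using m K unfolding K'_def by auto
  define g where "g t = (\<Sum>s\<in>K'. C s * exp ((s - m) / t))" for t
  have sum_eq: "(\<Sum>s\<in>K. C s * exp (s / t)) = exp (m / t) * g t" for t
  proof -
    have "(\<Sum>s\<in>K. C s * exp (s / t)) = (\<Sum>s\<in>K'. C s * exp (s / t))"
      by (rule sum.mono_neutral_right) (use K K'_def in auto)
    also have "\<dots> = exp (m / t) * g t"
      unfolding g_def sum_distrib_left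
      by (rule sum.cong) (auto simp: exp_add[symmetric] diff_divide_distrib algebra_simps)
    finally show ?thesis .
  qed
  have "(g \<longlongrightarrow> (\<Sum>s\<in>K'. if s = m then C s else 0)) (at_right 0)"
    unfolding g_def
  proof (rule tendsto_sum)
    fix s assume "s \<in> K'"
    show "((\<lambda>t. C s * exp ((s - m) / t)) \<longlongrightarrow> (if s = m then C s else 0)) (at_right 0)"
    proof (cases "s = m")
      case False
      then have "s - m < 0" using m(2)[OF \<open>s \<in> K'\<close>] by simp
      then have "filterlim (\<lambda>t. (s - m) * inverse t) at_bot (at_right 0)"
        by (intro filterlim_tendsto_neg_mult_at_bot[OF tendsto_const _ filterlim_inverse_at_top_right])
      then have "((\<lambda>t. exp ((s - m) / t)) \<longlongrightarrow> 0) (at_right 0)"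
        using exp_at_bot filterlim_compose by (fastforce simp: divide_inverse)
      then show ?thesis using False by (auto intro: tendsto_mult_right_zero)
    qed simp
  qed
  also have "(\<Sum>s\<in>K'. if s = m then C s else 0) = C m" using m K' by simp
  finally have "((\<lambda>t. \<bar>g t\<bar>) \<longlongrightarrow> \<bar>C m\<bar>) (at_right 0)" by (rule tendsto_rabs)
  then have "eventually (\<lambda>t. \<bar>C m\<bar> / 2 < \<bar>g t\<bar>) (at_right 0)"
    by (rule order_tendstoD) (use \<open>C m \<noteq> 0\<close> in simp)
  then have "eventually (\<lambda>t. \<bar>C m\<bar> / 2 * m / t \<le> \<bar>\<Sum>s\<in>K. C s * exp (s / t)\<bar>) (at_right 0)"
    using eventually_at_right_less[of 0]
  proof eventually_elim
    case (elim t)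
    have "m / t \<le> exp (m / t)" using exp_ge_add_one_self[of "m / t"] by linarith
    then have "\<bar>C m\<bar> / 2 * (m / t) \<le> \<bar>g t\<bar> * exp (m / t)"
      using elim \<open>m > 0\<close> by (intro mult_mono) auto
    then show ?case by (simp add: sum_eq abs_mult algebra_simps)
  qed
  then show ?thesis using \<open>m > 0\<close> \<open>C m \<noteq> 0\<close> by (intro exI[of _ "\<bar>C m\<bar> / 2 * m"]) simp
qed

lemma exp_poly_growth_indexed:
  fixes C E :: "'m \<Rightarrow> real"
  assumes "finite M" "inj_on E M" "E ` M \<subseteq> {0<..}" "\<exists>m\<in>M. C m \<noteq> 0"
  shows "\<exists>\<kappa>>0. eventually (\<lambda>t. \<kappa> / t \<le> \<bar>\<Sum>m\<in>M. C m * exp (E m / t)\<bar>) (at_right 0)"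
proof -
  define C' where "C' s = C (the_inv_into M E s)" for s
  have "(\<Sum>m\<in>M. C m * exp (E m / t)) = (\<Sum>s\<in>E ` M. C' s * exp (s / t))" for t
    by (simp add: sum.reindex[OF assms(2)] C'_def the_inv_into_f_f[OF assms(2)])
  moreover have "\<exists>s\<in>E ` M. C' s \<noteq> 0"
    using assms(4) by (auto simp: C'_def the_inv_into_f_f[OF assms(2)])
  ultimately show ?thesis
    using exp_poly_growth_finite[of "E ` M" C'] assms(1,3) by simp
qed

definition exp_poly :: "(real \<times> real) list \<Rightarrow> real \<Rightarrow> real" where
  "exp_poly xs t = (\<Sum>(c, s)\<leftarrow>xs. c * exp (s / t))"

lemma exp_poly_Nil [simp]: "exp_poly [] t = 0"
  and exp_poly_Cons [simp]: "exp_poly ((c, s) # xs) t = c * exp (s / t) + exp_poly xs t"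
  and exp_poly_append [simp]: "exp_poly (xs @ ys) t = exp_poly xs t + exp_poly ys t"
  by (simp_all add: exp_poly_def)

lemma exp_poly_mult:
  "exp_poly [(c * c', s + s'). (c, s) \<leftarrow> xs, (c', s') \<leftarrow> ys] t = exp_poly xs t * exp_poly ys t"
proof (induction xs)
  case (Cons p xs)
  have "exp_poly [(c * c', s + s'). (c', s') \<leftarrow> ys] t = c * exp (s / t) * exp_poly ys t" for c s
    by (induction ys) (auto simp: algebra_simps add_divide_distrib exp_add)
  with Cons show ?case by (cases p) (simp add: algebra_simps)
qed simp

lemma exp_poly_scale: "exp_poly [(k * c, s). (c, s) \<leftarrow> xs] t = k * exp_poly xs t"
  by (induction xs) (auto simp: algebra_simps)

lemma exp_poly_measurable: "exp_poly xs \<in> borel_measurable lebesgue"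
proof (induction xs)
  case (Cons p xs)
  obtain c s where "p = (c, s)" by (cases p)
  then have "exp_poly (p # xs) = (\<lambda>t. c * exp (s / t) + exp_poly xs t)" by auto
  moreover have "(\<lambda>t. c * exp (s / t) + exp_poly xs t) \<in> borel_measurable lebesgue"
    by measurable (use Cons.IH id_borel_measurable_lebesgue in \<open>simp_all add: id_def\<close>)
  ultimately show ?case by simp
qed (simp add: exp_poly_def)

definition exp_coeff :: "(real \<times> real) list \<Rightarrow> real \<Rightarrow> real" where
  "exp_coeff xs s = (\<Sum>(c, s')\<leftarrow>xs. if s' = s then c else 0)"

lemma exp_poly_eq_sum_exp_coeff:
  assumes "finite K" "snd ` set xs \<subseteq> K"
  shows "exp_poly xs t = (\<Sum>s\<in>K. exp_coeff xs s * exp (s / t))"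
  using assms(2)
proof (induction xs)
  case (Cons p xs)
  obtain c s0 where p: "p = (c, s0)" by (cases p)
  have "(\<Sum>s\<in>K. exp_coeff (p # xs) s * exp (s / t)) =
      (\<Sum>s\<in>K. if s = s0 then c * exp (s / t) else 0) + (\<Sum>s\<in>K. exp_coeff xs s * exp (s / t))"
    unfolding sum.distrib[symmetric] by (rule sum.cong) (auto simp: p exp_coeff_def algebra_simps)
  also have "(\<Sum>s\<in>K. if s = s0 then c * exp (s / t) else 0) = c * exp (s0 / t)"
    using Cons.prems assms(1) p by simp
  finally show ?case using Cons p by simp
qed (simp add: exp_coeff_def)

lemma exp_poly_growth:
  assumes "\<forall>(c, s)\<in>set xs. s > 0" and "exp_poly xs \<noteq> (\<lambda>_. 0)"
  shows "\<exists>\<kappa>>0. eventually (\<lambda>t. \<kappa> / t \<le> \<bar>exp_poly xs t\<bar>) (at_right 0)"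
proof -
  have eq: "exp_poly xs t = (\<Sum>s\<in>snd ` set xs. exp_coeff xs s * exp (s / t))" for t
    by (rule exp_poly_eq_sum_exp_coeff) auto
  have "\<exists>s\<in>snd ` set xs. exp_coeff xs s \<noteq> 0"
  proof (rule ccontr)
    assume "\<not> ?thesis"
    then have "exp_poly xs = (\<lambda>_. 0)" unfolding eq by (intro ext sum.neutral) auto
    with assms(2) show False ..
  qed
  then show ?thesis
    unfolding eq using assms(1) by (intro exp_poly_growth_finite) auto
qed

lemma inverse_not_integrable_near_0:
  assumes "\<kappa> > 0" "0 < \<delta>" "\<delta> \<le> 1"
  shows "\<not> integrable L01 (\<lambda>x. indicator {0<..\<delta>} x * (\<kappa> / x))"
proof
  define h where "h x = indicator {0<..\<delta>} x * (\<kappa> / x)" for x :: real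
  assume "integrable L01 h"
  then have "integrable lebesgue (\<lambda>x. indicator {0..1} x *\<^sub>R h x)"
    by (subst integrable_restrict_space[symmetric]) auto
  then have hi: "h integrable_on {0..1}"
    using absolutely_integrable_on_def set_integrable_def by blast
  have h0: "\<forall>x\<in>{0..1}. 0 \<le> h x" unfolding h_def using assms by (auto simp: indicator_def)
  define I where "I = integral {0..1} h"
  \<comment> \<open>chosen so that the integral of \<open>\<kappa> / x\<close> over \<open>[\<epsilon>, \<delta>]\<close> is \<open>I + \<kappa>\<close>, more than the whole of \<open>I\<close>\<close>
  define \<epsilon> where "\<epsilon> = \<delta> * exp (- (I / \<kappa>) - 1)"
  have "0 \<le> I" unfolding I_def using h0 hi by (intro integral_nonneg) auto
  then have "0 \<le> I / \<kappa>" using assms by simp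
  then have "exp (- (I / \<kappa>) - 1) \<le> 1" by simp
  then have \<epsilon>: "0 < \<epsilon>" "\<epsilon> \<le> \<delta>" unfolding \<epsilon>_def using assms by (auto simp: mult_le_cancel_left1)
  have sub: "{\<epsilon>..\<delta>} \<subseteq> {0..1}" using \<epsilon> assms by auto
  have "((\<lambda>x. \<kappa> / x) has_integral (\<kappa> * ln \<delta> - \<kappa> * ln \<epsilon>)) {\<epsilon>..\<delta>}"
  proof (rule fundamental_theorem_of_calculus[OF \<epsilon>(2)])
    fix x assume "x \<in> {\<epsilon>..\<delta>}"
    then have "((\<lambda>x. \<kappa> * ln x) has_real_derivative \<kappa> / x) (at x within {\<epsilon>..\<delta>})"
      using \<epsilon> by (auto intro!: derivative_eq_intros)
    then show "((\<lambda>x. \<kappa> * ln x) has_vector_derivative \<kappa> / x) (at x within {\<epsilon>..\<delta>})"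
      by (simp add: has_real_derivative_iff_has_vector_derivative)
  qed
  then have "(h has_integral (\<kappa> * ln \<delta> - \<kappa> * ln \<epsilon>)) {\<epsilon>..\<delta>}"
    by (rule has_integral_eq[rotated]) (use \<epsilon> in \<open>auto simp: h_def\<close>)
  moreover have "ln \<epsilon> = ln \<delta> - I / \<kappa> - 1" unfolding \<epsilon>_def using assms by (simp add: ln_mult)
  ultimately have "integral {\<epsilon>..\<delta>} h = I + \<kappa>"
    using assms by (simp add: integral_unique algebra_simps)
  moreover have "integral {\<epsilon>..\<delta>} h \<le> I"
    unfolding I_def using integral_subset_le[OF sub integrable_on_subinterval[OF hi sub] hi h0] .
  ultimately show False using assms by simp
qed

section \<open>Truncated sequences\<close>

lemma eventually_at_right_0_interval:
  assumes "eventually P (at_right (0::real))"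
  obtains \<delta> where "0 < \<delta>" "\<delta> \<le> 1" "\<And>t. t \<in> {0<..\<delta>} \<Longrightarrow> P t"
proof -
  obtain b where "b > 0" "\<And>t. 0 < t \<Longrightarrow> t < b \<Longrightarrow> P t"
    using assms unfolding eventually_at_right_field by blast
  then show ?thesis by (intro that[of "min 1 (b / 2)"]) auto
qed

definition truncation :: "('i \<Rightarrow> real set) \<Rightarrow> (real \<Rightarrow> real) \<Rightarrow> 'i \<Rightarrow> real \<Rightarrow> real" where
  "truncation N q a t = (if t \<in> {0..1} \<and> t \<notin> N a then q t else 0)"

locale null_exhaustion =
  fixes r :: "'i rel" and N :: "'i \<Rightarrow> real set"
  assumes tailF_neq_bot: "tailF r \<noteq> bot"
    and Field_nonempty: "Field r \<noteq> {}"
    and null_segment: "\<And>a. N a \<inter> {0..1} \<in> null_sets lebesgue"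
    and eventually_mem: "\<And>x. eventually (\<lambda>a. x \<in> N a) (tailF r)"
begin

lemma truncation_measurable:
  assumes "q \<in> borel_measurable lebesgue"
  shows "truncation N q a \<in> borel_measurable L01"
proof -
  have "truncation N q a = (\<lambda>t. indicator ({0..1} - N a \<inter> {0..1}) t * q t)"
    by (auto simp: truncation_def indicator_def)
  moreover have "N a \<inter> {0..1} \<in> sets lebesgue" using null_segment by (rule null_setsD2)
  ultimately show ?thesis
    using assms by (auto intro!: measurable_restrict_space1 borel_measurable_times borel_measurable_indicator)
qed

lemma truncation_tendsto_0: "((\<lambda>a. truncation N q a x) \<longlongrightarrow> 0) (tailF r)"
proof (rule tendsto_eventually)
  show "eventually (\<lambda>a. truncation N q a x = 0) (tailF r)"
    using eventually_mem[of x] by eventually_elim (simp add: truncation_def)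
qed

lemma measure_interval_diff_segment:
  assumes "0 < \<delta>" "\<delta> \<le> 1"
  shows "measure L01 ({0<..\<delta>} - N a) = \<delta>"
proof -
  have "measure lebesgue ({0<..\<delta>} - N a \<inter> {0..1}) = measure lebesgue {0<..\<delta>}"
    using null_segment by (intro measure_Diff_null_set) auto
  moreover have "{0<..\<delta>} - N a = {0<..\<delta>} - N a \<inter> {0..1}" using assms by auto
  ultimately show ?thesis
    using assms null_segment by (subst measure_restrict_space) auto
qed

lemma exists_notin_segment:
  assumes "0 < \<delta>" "\<delta> \<le> 1"
  obtains t where "t \<in> {0<..\<delta>}" "t \<notin> N a"
proof -
  have "{0<..\<delta>} - N a \<noteq> {}"
  proof
    assume empty: "{0<..\<delta>} - N a = {}"
    have "\<delta> = measure L01 ({0<..\<delta>} - N a)" using measure_interval_diff_segment[OF assms] by simp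
    also have "\<dots> = 0" unfolding empty by simp
    finally show False using assms by simp
  qed
  then show ?thesis using that by blast
qed

lemma truncation_not_conv_in_measure:
  assumes q: "q \<in> borel_measurable lebesgue" and "\<kappa> > 0"
    and blowup: "eventually (\<lambda>t. \<kappa> / t \<le> \<bar>q t\<bar>) (at_right 0)"
  shows "\<not> conv_in_measure r (truncation N q) (\<lambda>_. 0)"
proof
  obtain \<delta> where \<delta>: "0 < \<delta>" "\<delta> \<le> 1" "\<And>t. t \<in> {0<..\<delta>} \<Longrightarrow> \<kappa> / t \<le> \<bar>q t\<bar>"
    using eventually_at_right_0_interval[OF blowup] by blast
  define A where "A a = {x\<in>{0..1}. \<kappa> \<le> \<bar>truncation N q a x - 0\<bar>}" for a
  assume "conv_in_measure r (truncation N q) (\<lambda>_. 0)"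
  then have "((\<lambda>a. measure L01 (A a)) \<longlongrightarrow> 0) (tailF r)"
    using \<open>\<kappa> > 0\<close> unfolding conv_in_measure_def A_def by blast
  then have "eventually (\<lambda>a. measure L01 (A a) < \<delta>) (tailF r)"
    using \<delta>(1) by (rule order_tendstoD)
  moreover have "\<delta> \<le> measure L01 (A a)" for a
  proof -
    have "{0<..\<delta>} - N a \<subseteq> A a"
    proof
      fix x assume x: "x \<in> {0<..\<delta>} - N a"
      then have "\<kappa> \<le> \<kappa> / x" using \<delta> \<open>\<kappa> > 0\<close> by (simp add: le_divide_eq)
      with x \<delta> show "x \<in> A a" by (force simp: A_def truncation_def)
    qed
    moreover have "A a \<in> sets L01"
    proof -
      have "(\<lambda>x. \<bar>truncation N q a x - 0\<bar>) \<in> borel_measurable L01"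
        using truncation_measurable[OF q] by measurable
      then have "(\<lambda>x. \<bar>truncation N q a x - 0\<bar>) -` {\<kappa>..} \<inter> space L01 \<in> sets L01"
        by (rule measurable_sets) simp
      moreover have "(\<lambda>x. \<bar>truncation N q a x - 0\<bar>) -` {\<kappa>..} \<inter> space L01 = A a"
        by (auto simp: A_def)
      ultimately show ?thesis by simp
    qed
    ultimately have "measure L01 ({0<..\<delta>} - N a) \<le> measure L01 (A a)"
      by (intro finite_measure.finite_measure_mono finite_measure_lebesgue_on) auto
    then show ?thesis using measure_interval_diff_segment[OF \<delta>(1,2)] by simp
  qed
  ultimately have "eventually (\<lambda>_. False) (tailF r)"
    by (auto elim: eventually_mono simp: not_less[symmetric])
  with tailF_neq_bot show False by (simp add: eventually_False)
qed

lemma truncation_in_ANM: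
  assumes "q \<in> borel_measurable lebesgue" "\<kappa> > 0"
    and "eventually (\<lambda>t. \<kappa> / t \<le> \<bar>q t\<bar>) (at_right 0)"
  shows "truncation N q \<in> ANM r"
  unfolding ANM_def
  using truncation_measurable[OF assms(1)] truncation_tendsto_0 truncation_not_conv_in_measure[OF assms]
  by (auto intro!: exI[of _ "\<lambda>_. 0"])

lemma truncation_notin_ND:
  assumes "\<kappa> > 0" and blowup: "eventually (\<lambda>t. \<kappa> / t \<le> \<bar>q t\<bar>) (at_right 0)"
  shows "truncation N q \<notin> ND r"
proof
  obtain \<delta> where \<delta>: "0 < \<delta>" "\<delta> \<le> 1" "\<And>t. t \<in> {0<..\<delta>} \<Longrightarrow> \<kappa> / t \<le> \<bar>q t\<bar>"
    using eventually_at_right_0_interval[OF blowup] by blast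
  obtain a where a: "a \<in> Field r" using Field_nonempty by blast
  assume "truncation N q \<in> ND r"
  then obtain g where g: "integrable L01 g" "AE x in L01. \<bar>truncation N q a x\<bar> \<le> g x"
    unfolding ND_def using a by blast
  define h where "h x = indicator {0<..\<delta>} x * (\<kappa> / x)" for x :: real
  have "h \<in> borel_measurable L01"
    unfolding h_def
    by (intro measurable_restrict_space1 borel_measurable_times measurable_completion borel_measurable_divide) auto
  moreover have "AE x in L01. x \<notin> N a"
  proof -
    have "AE x in lebesgue. x \<notin> N a \<inter> {0..1}" using null_segment by (rule AE_not_in)
    then show ?thesis by (subst AE_restrict_space_iff) (auto elim!: eventually_mono)
  qed
  then have "AE x in L01. norm (h x) \<le> norm (g x)"
    using g(2)
  proof eventually_elim
    case (elim x)
    show ?case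
    proof (cases "x \<in> {0<..\<delta>}")
      case True
      then have "h x = \<kappa> / x" "\<kappa> / x \<le> \<bar>truncation N q a x\<bar>"
        using \<delta> elim(1) by (auto simp: h_def truncation_def)
      then show ?thesis using elim(2) \<open>\<kappa> > 0\<close> True by simp
    qed (simp add: h_def)
  qed
  ultimately have "integrable L01 h" using Bochner_Integration.integrable_bound[OF g(1)] by blast
  then show False using inverse_not_integrable_near_0[OF \<open>\<kappa> > 0\<close> \<delta>(1,2)] unfolding h_def by blast
qed

lemma exp_poly_truncation_in_ANM_diff_ND:
  assumes "\<forall>(c, s)\<in>set xs. s > 0" and "truncation N (exp_poly xs) \<noteq> (\<lambda>a t. 0)"
  shows "truncation N (exp_poly xs) \<in> ANM r - ND r"
proof -
  have "exp_poly xs \<noteq> (\<lambda>_. 0)"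
    using assms(2) by (auto simp: truncation_def fun_eq_iff split: if_splits)
  then obtain \<kappa> where "\<kappa> > 0" "eventually (\<lambda>t. \<kappa> / t \<le> \<bar>exp_poly xs t\<bar>) (at_right 0)"
    using exp_poly_growth[OF assms(1)] by blast
  moreover have "exp_poly xs \<in> borel_measurable lebesgue"
    by (rule exp_poly_measurable)
  ultimately show ?thesis
    using truncation_in_ANM truncation_notin_ND by blast
qed

end

section \<open>The generators\<close>

definition exp_gen :: "('i \<Rightarrow> real set) \<Rightarrow> real \<Rightarrow> 'i \<Rightarrow> real \<Rightarrow> real" where
  "exp_gen N b = truncation N (\<lambda>t. exp (b / t))"

lemma gen_alg_exp_gen_cases:
  assumes "B \<subseteq> {0<..}" and "F \<in> gen_alg (exp_gen N ` B)"
  obtains xs where "\<forall>(c, s)\<in>set xs. s > 0" "F = truncation N (exp_poly xs)"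
proof -
  have "\<exists>xs. (\<forall>(c, s)\<in>set xs. s > 0) \<and> F = truncation N (exp_poly xs)"
    using assms(2)
  proof induction
    case (gen_base F)
    then obtain b where "b \<in> B" "F = exp_gen N b" by blast
    with assms(1) show ?case
      by (intro exI[of _ "[(1, b)]"]) (auto simp: exp_gen_def fun_eq_iff)
  next
    case (gen_add F G)
    then obtain xs ys where "\<forall>(c, s)\<in>set xs. s > 0" "F = truncation N (exp_poly xs)"
      "\<forall>(c, s)\<in>set ys. s > 0" "G = truncation N (exp_poly ys)" by blast
    then show ?case
      by (intro exI[of _ "xs @ ys"]) (auto simp: truncation_def fun_eq_iff)
  next
    case (gen_mult F G)
    then obtain xs ys where "\<forall>(c, s)\<in>set xs. s > 0" "F = truncation N (exp_poly xs)"
      "\<forall>(c, s)\<in>set ys. s > 0" "G = truncation N (exp_poly ys)" by blast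
    then show ?case
      by (intro exI[of _ "[(c * c', s + s'). (c, s) \<leftarrow> xs, (c', s') \<leftarrow> ys]"])
        (fastforce simp: truncation_def fun_eq_iff exp_poly_mult)
  next
    case (gen_scale F k)
    then obtain xs where "\<forall>(c, s)\<in>set xs. s > 0" "F = truncation N (exp_poly xs)" by blast
    then show ?case
      by (intro exI[of _ "[(k * c, s). (c, s) \<leftarrow> xs]"])
        (fastforce simp: truncation_def fun_eq_iff exp_poly_scale)
  qed
  then show ?thesis using that by blast
qed

lemma (in null_exhaustion) gen_alg_exp_gen_in_ANM_diff_ND:
  assumes "B \<subseteq> {0<..}" "F \<in> gen_alg (exp_gen N ` B)" "F \<noteq> (\<lambda>a t. 0)"
  shows "F \<in> ANM r - ND r"
  using gen_alg_exp_gen_cases[OF assms(1,2)] exp_poly_truncation_in_ANM_diff_ND assms(3) by metis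


definition exponent :: "(real \<Rightarrow> 'v) \<Rightarrow> ('v \<Rightarrow>\<^sub>0 nat) \<Rightarrow> real" where
  "exponent G m = (\<Sum>v\<in>Poly_Mapping.keys m. of_nat (Poly_Mapping.lookup m v) * inv G v)"

lemma exponent_pos:
  assumes "inj G" "B \<subseteq> {0<..}" "Poly_Mapping.keys m \<subseteq> G ` B" "m \<noteq> 0"
  shows "exponent G m > 0"
  unfolding exponent_def
proof (rule sum_pos)
  fix v assume v: "v \<in> Poly_Mapping.keys m"
  then obtain b where "b \<in> B" "v = G b" using assms(3) by blast
  then have "inv G v > 0" using assms(1,2) by auto
  moreover have "Poly_Mapping.lookup m v > 0" using v by (simp add: in_keys_iff)
  ultimately show "of_nat (Poly_Mapping.lookup m v) * inv G v > 0" by simp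
qed (use assms(4) in auto)

lemma exponent_inj:
  assumes G: "inj G" and B: "Q.independent B"
  shows "inj_on (exponent G) {m. Poly_Mapping.keys m \<subseteq> G ` B}"
proof (rule inj_onI, clarify)
  fix m1 m2 :: "'a \<Rightarrow>\<^sub>0 nat"
  assume m: "Poly_Mapping.keys m1 \<subseteq> G ` B" "Poly_Mapping.keys m2 \<subseteq> G ` B"
    and eq: "exponent G m1 = exponent G m2"
  define K where "K = Poly_Mapping.keys m1 \<union> Poly_Mapping.keys m2"
  have K: "finite K" "K \<subseteq> G ` B" unfolding K_def using m by auto
  have exponent_K: "exponent G m = (\<Sum>v\<in>K. of_nat (Poly_Mapping.lookup m v) * inv G v)"
    if "Poly_Mapping.keys m \<subseteq> K" for m
    unfolding exponent_def by (rule sum.mono_neutral_left) (use K that in \<open>auto simp: in_keys_iff\<close>)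
  define u where "u b = of_nat (Poly_Mapping.lookup m1 (G b)) - (of_nat (Poly_Mapping.lookup m2 (G b)) :: rat)" for b
  have G_inv: "G (inv G v) = v" if "v \<in> K" for v using K that by (auto simp: G)
  have "0 = exponent G m1 - exponent G m2" using eq by simp
  also have "\<dots> = (\<Sum>v\<in>K. (of_nat (Poly_Mapping.lookup m1 v) - of_nat (Poly_Mapping.lookup m2 v)) * inv G v)"
    using exponent_K[of m1] exponent_K[of m2] unfolding K_def by (simp add: sum_subtractf left_diff_distrib)
  also have "\<dots> = (\<Sum>v\<in>K. of_rat (u (inv G v)) * inv G v)"
    by (intro sum.cong refl) (simp add: u_def G_inv of_rat_diff)
  also have "\<dots> = (\<Sum>b\<in>inv G ` K. of_rat (u b) * b)"
    by (rule sum.reindex[symmetric, unfolded o_def]) (metis G_inv inj_onI)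
  finally have "(\<Sum>b\<in>inv G ` K. of_rat (u b) * b) = 0" by simp
  moreover have "inv G ` K \<subseteq> B" using K by (auto simp: G)
  ultimately have u_0: "u (inv G v) = 0" if "v \<in> K" for v
    using Q.independentD[OF B] K(1) that by blast
  have "Poly_Mapping.lookup m1 v = Poly_Mapping.lookup m2 v" for v
  proof (cases "v \<in> K")
    case True
    then show ?thesis using u_0[OF True] G_inv[OF True] unfolding u_def by simp
  next
    case False
    then show ?thesis unfolding K_def by (simp add: in_keys_iff)
  qed
  then show "m1 = m2" by (rule poly_mapping_eqI)
qed

lemma mono_eval_exp_gen:
  assumes "Poly_Mapping.keys m \<subseteq> range (exp_gen N)" "t \<in> {0..1}" "t \<notin> N a"
  shows "mono_eval m a t = exp (exponent (exp_gen N) m / t)"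
proof -
  have "mono_eval m a t =
      (\<Prod>v\<in>Poly_Mapping.keys m. exp (of_nat (Poly_Mapping.lookup m v) * (inv (exp_gen N) v / t)))"
    unfolding mono_eval_def
  proof (rule prod.cong[OF refl])
    fix v assume "v \<in> Poly_Mapping.keys m"
    define b where "b = inv (exp_gen N) v"
    have "v = exp_gen N b" unfolding b_def using assms(1) \<open>v \<in> _\<close> by (auto intro: f_inv_into_f[symmetric])
    then have "v a t = exp (b / t)" using assms(2,3) by (simp add: exp_gen_def truncation_def)
    then show "v a t ^ Poly_Mapping.lookup m v =
        exp (of_nat (Poly_Mapping.lookup m v) * (inv (exp_gen N) v / t))"
      by (simp only: exp_of_nat_mult b_def)
  qed
  also have "\<dots> = exp (exponent (exp_gen N) m / t)"
    unfolding exponent_def sum_divide_distrib by (simp add: exp_sum algebra_simps)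
  finally show ?thesis .
qed

lemma poly_eval_exp_gen:
  assumes "\<forall>m\<in>Poly_Mapping.keys P. Poly_Mapping.keys m \<subseteq> range (exp_gen N)" "t \<in> {0..1}" "t \<notin> N a"
  shows "poly_eval P a t =
    (\<Sum>m\<in>Poly_Mapping.keys P. Poly_Mapping.lookup P m * exp (exponent (exp_gen N) m / t))"
  unfolding poly_eval_def using assms by (intro sum.cong refl) (simp add: mono_eval_exp_gen)

context null_exhaustion
begin

lemma inj_exp_gen: "inj (exp_gen N)"
proof (rule injI)
  fix b b' assume eq: "exp_gen N b = exp_gen N b'"
  obtain a where "a \<in> Field r" using Field_nonempty by blast
  obtain t where t: "t \<in> {0<..1}" "t \<notin> N a" using exists_notin_segment[of 1] by auto
  then have "exp (b / t) = exp (b' / t)"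
    using fun_cong[OF fun_cong[OF eq, of a], of t] by (simp add: exp_gen_def truncation_def)
  then show "b = b'" using t by (simp add: divide_cancel_right)
qed

lemma alg_indep_exp_gen:
  assumes B: "Q.independent B" "B \<subseteq> {0<..}"
  shows "alg_indep (exp_gen N ` B)"
  unfolding alg_indep_def
proof (intro allI impI notI)
  fix P :: "(('i \<Rightarrow> real \<Rightarrow> real) \<Rightarrow>\<^sub>0 nat) \<Rightarrow>\<^sub>0 real"
  assume P: "P \<noteq> 0 \<and> Poly_Mapping.lookup P 0 = 0 \<and>
      (\<forall>m\<in>Poly_Mapping.keys P. Poly_Mapping.keys m \<subseteq> exp_gen N ` B)"
    and zero: "poly_eval P = (\<lambda>a t. 0)"
  define M where "M = Poly_Mapping.keys P"
  define E where "E = exponent (exp_gen N)"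
  have M: "finite M" "0 \<notin> M" "\<And>m. m \<in> M \<Longrightarrow> Poly_Mapping.keys m \<subseteq> exp_gen N ` B"
    "\<exists>m\<in>M. Poly_Mapping.lookup P m \<noteq> 0"
    using P unfolding M_def by (auto simp: in_keys_iff) (metis lookup_zero poly_mapping_eqI)
  have "inj_on E M"
    unfolding E_def by (rule inj_on_subset[OF exponent_inj[OF inj_exp_gen B(1)]]) (use M(3) in blast)
  moreover have "E ` M \<subseteq> {0<..}"
    using exponent_pos[OF inj_exp_gen B(2) M(3)] M(2) unfolding E_def by fastforce
  ultimately obtain \<kappa> where "\<kappa> > 0"
    and growth: "eventually (\<lambda>t. \<kappa> / t \<le> \<bar>\<Sum>m\<in>M. Poly_Mapping.lookup P m * exp (E m / t)\<bar>) (at_right 0)"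
    using exp_poly_growth_indexed[OF M(1) _ _ M(4)] by blast
  obtain \<delta> where \<delta>: "0 < \<delta>" "\<delta> \<le> 1"
    "\<And>t. t \<in> {0<..\<delta>} \<Longrightarrow> \<kappa> / t \<le> \<bar>\<Sum>m\<in>M. Poly_Mapping.lookup P m * exp (E m / t)\<bar>"
    using eventually_at_right_0_interval[OF growth] by blast
  obtain a where "a \<in> Field r" using Field_nonempty by blast
  obtain t where t: "t \<in> {0<..\<delta>}" "t \<notin> N a" using exists_notin_segment[OF \<delta>(1,2)] by blast
  have "poly_eval P a t = (\<Sum>m\<in>M. Poly_Mapping.lookup P m * exp (E m / t))"
    unfolding M_def E_def using P t \<delta> by (intro poly_eval_exp_gen) fastforce+
  moreover have "0 < \<kappa> / t" using \<open>\<kappa> > 0\<close> t by simp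
  ultimately have "0 < \<bar>poly_eval P a t\<bar>" using \<delta>(3)[OF t(1)] by linarith
  then show False using zero by simp
qed

end

theorem mainTheorem11:
  assumes nonN: "\<forall>A. A \<subseteq> {0..1::real} \<and> A \<prec> (UNIV :: real set) \<longrightarrow> A \<in> null_sets lebesgue"
  shows "strongly_algebrable (ANM cidx - ND cidx) (UNIV :: real set)"
proof -
  obtain B where B: "B \<subseteq> {0<..}" "Q.independent B" "B \<approx> (UNIV :: real set)"
    by (rule Q_independent_positive_reals)
  interpret null_exhaustion cidx "underS cidx"
  proof
    fix a
    have "underS cidx a \<inter> {0..1} \<prec> (UNIV :: real set)"
      using lesspoll_trans1[OF subset_imp_lepoll underS_cidx_lesspoll] by blast
    then show "underS cidx a \<inter> {0..1} \<in> null_sets lebesgue" using nonN by blast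
  qed (simp_all add: tailF_cidx_neq_bot Field_cidx eventually_in_underS_cidx)
  have "exp_gen (underS cidx) ` B \<subseteq> seq_carrier"
    by (auto simp: seq_carrier_def exp_gen_def truncation_def)
  moreover have "exp_gen (underS cidx) ` B \<approx> (UNIV :: real set)"
    using inj_on_image_eqpoll_self[OF inj_on_subset[OF inj_exp_gen]] B(3) eqpoll_trans by blast
  ultimately show ?thesis
    unfolding strongly_algebrable_def
    using alg_indep_exp_gen[OF B(2,1)] gen_alg_exp_gen_in_ANM_diff_ND[OF B(1)] by blast
qed

end
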